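(* Let $\vec a=(a_1,\dots,a_n)\in\mathbb R^n_{>0}$, $\Sigma=\partial E(\vec a)$ and $Z=Z_{\vec a}:=2\pi\sum_{j=1}^n\frac1{a_j}(x_j\partial_{x_j}+y_j\partial_{y_j})$. Let $\alpha=\lambda_{std}|_\Sigma$ and let $\beta$ be the one-form on $\Sigma$ with $\ker\beta=T\Sigma\cap iT\Sigma$ and $\beta(iZ)=1$. Then there is a diffeomorphism $G:\partial E(\vec a)\to\partial E(\vec a)$ such that $G^*\alpha=\beta$.
   Context: $E(\vec a)=\{z\in\mathbb C^n:\pi\sum_j|z_j|^2/a_j\le1\}$, $z_j=x_j+iy_j$, $\lambda_{std}=\frac12\sum_j(x_jdy_j-y_jdx_j)$, and $i$ is the standard complex structure. *)

theory Defs
  imports "HOL-Analysis.Analysis"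
begin

fun Ck_on :: "nat \<Rightarrow> ('a::euclidean_space) set \<Rightarrow> ('a \<Rightarrow> 'b::euclidean_space) \<Rightarrow> bool" where
  "Ck_on 0 U f = continuous_on U f"
| "Ck_on (Suc k) U f = (f differentiable_on U \<and>
       (\<forall>v. Ck_on k U (\<lambda>x. frechet_derivative f (at x) v)))"

definition smooth_on :: "('a::euclidean_space) set \<Rightarrow> ('a \<Rightarrow> 'b::euclidean_space) \<Rightarrow> bool" where
  "smooth_on U f \<longleftrightarrow> open U \<and> (\<forall>k. Ck_on k U f)"

definition smooth_map_on :: "('a::euclidean_space) set \<Rightarrow> ('a \<Rightarrow> 'b::euclidean_space) \<Rightarrow> bool" where
  "smooth_map_on S g \<longleftrightarrow> (\<exists>U F. S \<subseteq> U \<and> smooth_on U F \<and> (\<forall>x\<in>S. F x = g x))"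

definition diffeo_on :: "('a::euclidean_space) set \<Rightarrow> ('a \<Rightarrow> 'a) \<Rightarrow> bool" where
  "diffeo_on S g \<longleftrightarrow> bij_betw g S S \<and> smooth_map_on S g \<and> smooth_map_on S (inv_into S g)"

definition tangent_space :: "('a::euclidean_space) set \<Rightarrow> 'a \<Rightarrow> 'a set" where
  "tangent_space S p = {v. \<exists>\<gamma>. (\<forall>t. \<gamma> t \<in> S) \<and> \<gamma> 0 = p \<and> (\<gamma> has_vector_derivative v) (at 0)}"

definition ellipsoid_boundary :: "real ^ 'n \<Rightarrow> (complex ^ 'n) set" where
  "ellipsoid_boundary a = {z. pi * (\<Sum>j\<in>UNIV. (cmod (z $ j))\<^sup>2 / a $ j) = 1}"

text \<open>lambda_std = 1/2 sum (x_j dy_j - y_j dx_j), evaluated at z on the vector w.\<close>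
definition lambda_std :: "complex ^ 'n \<Rightarrow> complex ^ 'n \<Rightarrow> real" where
  "lambda_std z w = (1/2) * (\<Sum>j\<in>UNIV. Re (z $ j) * Im (w $ j) - Im (z $ j) * Re (w $ j))"

definition Zfield :: "real ^ 'n \<Rightarrow> complex ^ 'n \<Rightarrow> complex ^ 'n" where
  "Zfield a z = (\<chi> j. complex_of_real (2 * pi / a $ j) * z $ j)"

definition cx_i :: "complex ^ 'n \<Rightarrow> complex ^ 'n" where
  "cx_i v = (\<chi> j. \<i> * v $ j)"

definition linear_on_subspace :: "('a::real_vector) set \<Rightarrow> ('a \<Rightarrow> real) \<Rightarrow> bool" where
  "linear_on_subspace V f \<longleftrightarrow>
     (\<forall>u\<in>V. \<forall>v\<in>V. f (u + v) = f u + f v) \<and> (\<forall>c. \<forall>u\<in>V. f (c *\<^sub>R u) = c * f u)"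

end

theory Submission
  imports Defs
begin

(*
  Put c = (1/a_j)_j and S(z) = sum_j |z_j|^2/a_j^2. The map G rescales each coordinate by a real
  factor, z_j -> (pi a_j S(z))^(-1/2) z_j. Since the factors are real, the derivative of G adds to
  the j-th coordinate of a vector only a multiple of z_j, which lambda_std does not see; hence
  (G^* alpha)_z(v) = sum_j omega(z_j, v_j)/(2 pi a_j S(z)) = omega_c(z, v)/(2 pi S(z)).
  On the other hand T_z Sigma = ker <z, .>_c and i T_z Sigma = ker omega_c(z, .), so beta and
  omega_c(z, .) are linear forms on T_z Sigma vanishing on the same hyperplane T_z Sigma \<inter> i T_z Sigma;
  comparing them on iZ, where omega_c(z, iZ) = 2 pi S(z), gives beta = G^* alpha.
  G is a diffeomorphism of Sigma with inverse u_j -> (pi |u|^2/a_j)^(-1/2) u_j. Both maps are built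
  from linear functions by sums, products and real powers of positive functions, a class which is
  closed under differentiation, so they are smooth.
*)

section \<open>Smoothness of elementary maps\<close>

lemma Ck_on_cong:
  assumes "open U" and "\<And>x. x \<in> U \<Longrightarrow> f x = g x"
  shows "Ck_on k U f \<longleftrightarrow> Ck_on k U g"
  using assms(2)
proof (induction k arbitrary: f g)
  case 0
  have "continuous_on U f \<longleftrightarrow> continuous_on U g"
    by (rule continuous_on_cong[OF refl]) (rule 0)
  then show ?case by simp
next
  case (Suc k)
  have deriv_iff: "(f has_derivative D) (at x) \<longleftrightarrow> (g has_derivative D) (at x)" if "x \<in> U" for x D
    using has_derivative_transform_within_open[OF _ \<open>open U\<close> that] Suc.prems by metis
  then have "f differentiable_on U \<longleftrightarrow> g differentiable_on U"
    using \<open>open U\<close> by (simp add: differentiable_on_eq_differentiable_at differentiable_def)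
  moreover have "Ck_on k U (\<lambda>x. frechet_derivative f (at x) v) \<longleftrightarrow>
      Ck_on k U (\<lambda>x. frechet_derivative g (at x) v)" for v
    by (rule Suc.IH) (simp add: deriv_iff frechet_derivative_def)
  ultimately show ?case by simp
qed

lemma Ck_on_of_derivative_closed:
  assumes "open U" and "f \<in> C"
    and differentiable: "\<And>g. g \<in> C \<Longrightarrow> g differentiable_on U"
    and derivative_closed: "\<And>g v. g \<in> C \<Longrightarrow> \<exists>h\<in>C. \<forall>x\<in>U. frechet_derivative g (at x) v = h x"
  shows "Ck_on k U f"
  using \<open>f \<in> C\<close>
proof (induction k arbitrary: f)
  case 0
  then show ?case by (simp add: differentiable differentiable_imp_continuous_on)
next
  case (Suc k)
  have "Ck_on k U (\<lambda>x. frechet_derivative f (at x) v)" for v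
  proof -
    obtain h where "h \<in> C" and h: "\<forall>x\<in>U. frechet_derivative f (at x) v = h x"
      using derivative_closed[OF Suc.prems] by blast
    have "Ck_on k U h" by (rule Suc.IH[OF \<open>h \<in> C\<close>])
    then show ?thesis
      using Ck_on_cong[OF \<open>open U\<close>, of "\<lambda>x. frechet_derivative f (at x) v" h] h by simp
  qed
  then show ?case by (simp add: differentiable Suc.prems)
qed

inductive_set elementary_real :: "'a set \<Rightarrow> ('a::real_normed_vector \<Rightarrow> real) set" for U
where
  const: "(\<lambda>x. c) \<in> elementary_real U"
| linear: "bounded_linear L \<Longrightarrow> L \<in> elementary_real U"
| add: "f \<in> elementary_real U \<Longrightarrow> g \<in> elementary_real U \<Longrightarrow> (\<lambda>x. f x + g x) \<in> elementary_real U"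
| mult: "f \<in> elementary_real U \<Longrightarrow> g \<in> elementary_real U \<Longrightarrow> (\<lambda>x. f x * g x) \<in> elementary_real U"
| powr: "f \<in> elementary_real U \<Longrightarrow> \<forall>x\<in>U. f x > 0 \<Longrightarrow> (\<lambda>x. f x powr r) \<in> elementary_real U"

lemma elementary_real_has_derivative:
  assumes "f \<in> elementary_real U"
  shows "\<exists>D. (\<forall>x\<in>U. (f has_derivative D x) (at x)) \<and> (\<forall>v. (\<lambda>x. D x v) \<in> elementary_real U)"
  using assms
proof (induction rule: elementary_real.induct)
  case (const c)
  show ?case
    by (intro exI[of _ "\<lambda>x v. 0"]) (auto intro: elementary_real.const)
next
  case (linear L)
  then show ?case
    by (intro exI[of _ "\<lambda>x. L"]) (auto intro: elementary_real.const bounded_linear_imp_has_derivative)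
next
  case (add f g)
  then obtain Df Dg where
    "\<forall>x\<in>U. (f has_derivative Df x) (at x)" "\<forall>v. (\<lambda>x. Df x v) \<in> elementary_real U"
    "\<forall>x\<in>U. (g has_derivative Dg x) (at x)" "\<forall>v. (\<lambda>x. Dg x v) \<in> elementary_real U"
    by blast
  then show ?case
    by (intro exI[of _ "\<lambda>x v. Df x v + Dg x v"]) (auto intro: elementary_real.add has_derivative_add)
next
  case (mult f g)
  then obtain Df Dg where
    "\<forall>x\<in>U. (f has_derivative Df x) (at x)" "\<forall>v. (\<lambda>x. Df x v) \<in> elementary_real U"
    "\<forall>x\<in>U. (g has_derivative Dg x) (at x)" "\<forall>v. (\<lambda>x. Dg x v) \<in> elementary_real U"
    by blast
  with mult.hyps show ?case
    by (intro exI[of _ "\<lambda>x v. f x * Dg x v + Df x v * g x"] conjI ballI allI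
        has_derivative_mult elementary_real.add elementary_real.mult) auto
next
  case (powr f r)
  then obtain Df where
    Df: "\<forall>x\<in>U. (f has_derivative Df x) (at x)" "\<forall>v. (\<lambda>x. Df x v) \<in> elementary_real U"
    by blast
  have "((\<lambda>x. f x powr r) has_derivative (\<lambda>v. r * f x powr (r - 1) * Df x v)) (at x)"
    if "x \<in> U" for x
  proof -
    have "f x > 0" using powr.hyps that by blast
    then have "(\<lambda>v. f x powr r * (0 * ln (f x) + Df x v * r / f x)) =
        (\<lambda>v. r * f x powr (r - 1) * Df x v)"
      by (simp add: powr_diff mult_ac)
    then show ?thesis
      using has_derivative_powr[where f="\<lambda>_. r", OF Df(1)[rule_format, OF that]
          has_derivative_const \<open>f x > 0\<close> UNIV_I]
      by simp
  qed
  moreover have "(\<lambda>x. r * f x powr (r - 1) * Df x v) \<in> elementary_real U" for v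
    by (intro elementary_real.mult elementary_real.const elementary_real.powr powr.hyps Df(2)[rule_format])
  ultimately show ?case
    by (intro exI[of _ "\<lambda>x v. r * f x powr (r - 1) * Df x v"]) blast
qed

definition elementary_vec :: "'a::euclidean_space set \<Rightarrow> ('a \<Rightarrow> 'b::euclidean_space) set" where
  "elementary_vec U = {F. \<forall>b\<in>Basis. (\<lambda>x. F x \<bullet> b) \<in> elementary_real U}"

lemma elementary_vec_has_derivative:
  assumes "F \<in> elementary_vec U"
  shows "\<exists>D. (\<forall>x\<in>U. (F has_derivative D x) (at x)) \<and> (\<forall>v. (\<lambda>x. D x v) \<in> elementary_vec U)"
proof -
  have "\<forall>b\<in>Basis. \<exists>D. (\<forall>x\<in>U. ((\<lambda>x. F x \<bullet> b) has_derivative D x) (at x)) \<and>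
      (\<forall>v. (\<lambda>x. D x v) \<in> elementary_real U)"
    using assms elementary_real_has_derivative unfolding elementary_vec_def by blast
  then obtain D where D: "\<And>b x. b \<in> Basis \<Longrightarrow> x \<in> U \<Longrightarrow> ((\<lambda>x. F x \<bullet> b) has_derivative D b x) (at x)"
    "\<And>b v. b \<in> Basis \<Longrightarrow> (\<lambda>x. D b x v) \<in> elementary_real U"
    by (metis bchoice)
  show ?thesis
  proof (intro exI[of _ "\<lambda>x v. \<Sum>b\<in>Basis. D b x v *\<^sub>R b"] conjI ballI allI)
    fix x assume "x \<in> U"
    then have "((\<lambda>x. \<Sum>b\<in>Basis. (F x \<bullet> b) *\<^sub>R b) has_derivative (\<lambda>v. \<Sum>b\<in>Basis. D b x v *\<^sub>R b)) (at x)"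
      by (intro has_derivative_sum has_derivative_scaleR_left D)
    then show "(F has_derivative (\<lambda>v. \<Sum>b\<in>Basis. D b x v *\<^sub>R b)) (at x)"
      by (simp add: euclidean_representation)
  next
    fix v show "(\<lambda>x. \<Sum>b\<in>Basis. D b x v *\<^sub>R b) \<in> elementary_vec U"
      using D(2) by (simp add: elementary_vec_def inner_sum_left_Basis)
  qed
qed

lemma smooth_on_elementary_vec:
  assumes "open U" and "F \<in> elementary_vec U"
  shows "smooth_on U F"
  unfolding smooth_on_def
proof (intro conjI allI \<open>open U\<close>)
  fix k
  show "Ck_on k U F"
  proof (rule Ck_on_of_derivative_closed[OF \<open>open U\<close> \<open>F \<in> elementary_vec U\<close>])
    fix G v assume "G \<in> elementary_vec U"
    then obtain D where D: "\<forall>x\<in>U. (G has_derivative D x) (at x)" "\<forall>v. (\<lambda>x. D x v) \<in> elementary_vec U"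
      using elementary_vec_has_derivative by blast
    then show "G differentiable_on U"
      using \<open>open U\<close> by (auto simp: differentiable_on_eq_differentiable_at differentiable_def)
    show "\<exists>H\<in>elementary_vec U. \<forall>x\<in>U. frechet_derivative G (at x) v = H x"
      using D frechet_derivative_at by (metis (no_types, lifting))
  qed
qed

section \<open>Weighted forms and coordinatewise rescalings of \<open>\<complex>\<^sup>n\<close>\<close>

definition weighted_sq :: "('n \<Rightarrow> real) \<Rightarrow> complex^'n \<Rightarrow> real" where
  "weighted_sq c z = (\<Sum>j\<in>UNIV. c j * (cmod (z $ j))\<^sup>2)"

definition weighted_inner :: "('n \<Rightarrow> real) \<Rightarrow> complex^'n \<Rightarrow> complex^'n \<Rightarrow> real" where
  "weighted_inner c z w = (\<Sum>j\<in>UNIV. c j * (Re (z $ j) * Re (w $ j) + Im (z $ j) * Im (w $ j)))"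

definition weighted_omega :: "('n \<Rightarrow> real) \<Rightarrow> complex^'n \<Rightarrow> complex^'n \<Rightarrow> real" where
  "weighted_omega c z w = (\<Sum>j\<in>UNIV. c j * (Re (z $ j) * Im (w $ j) - Im (z $ j) * Re (w $ j)))"

definition rescale :: "('n \<Rightarrow> complex^'n \<Rightarrow> real) \<Rightarrow> complex^'n \<Rightarrow> complex^'n" where
  "rescale \<phi> z = (\<chi> j. complex_of_real (\<phi> j z) * z $ j)"

lemma weighted_sq_eq_weighted_inner: "weighted_sq c z = weighted_inner c z z"
  unfolding weighted_sq_def weighted_inner_def cmod_power2 by (simp add: power2_eq_square)

lemma weighted_sq_pos:
  assumes "\<And>j. c j > 0" and "z \<noteq> 0"
  shows "weighted_sq c z > 0"
proof -
  obtain k where "z $ k \<noteq> 0" using \<open>z \<noteq> 0\<close> by (auto simp: vec_eq_iff)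
  then have "c k * (cmod (z $ k))\<^sup>2 > 0" using assms(1) by simp
  then show ?thesis
    unfolding weighted_sq_def
    by (rule sum_pos2[OF finite UNIV_I]) (simp add: assms(1) less_imp_le)
qed

lemma weighted_sq_divide_weights: "weighted_sq (\<lambda>j. c j / k) z = weighted_sq c z / k"
  by (simp add: weighted_sq_def sum_divide_distrib)

lemma weighted_omega_divide_weights: "weighted_omega (\<lambda>j. c j / k) z w = weighted_omega c z w / k"
  by (simp add: weighted_omega_def sum_divide_distrib)

lemma weighted_sq_scaleR: "weighted_sq c (s *\<^sub>R z) = s\<^sup>2 * weighted_sq c z"
  by (simp add: weighted_sq_def sum_distrib_left power_mult_distrib mult_ac)

lemma weighted_sq_rescale: "weighted_sq c (rescale \<phi> z) = weighted_sq (\<lambda>j. (\<phi> j z)\<^sup>2 * c j) z"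
  by (simp add: weighted_sq_def rescale_def norm_mult power_mult_distrib mult_ac)

lemma weighted_inner_rescale_self: "weighted_inner c z (rescale \<phi> z) = weighted_sq (\<lambda>j. \<phi> j z * c j) z"
  unfolding weighted_inner_def weighted_sq_def rescale_def cmod_power2
  by (simp add: power2_eq_square algebra_simps)

lemma weighted_omega_rescale_self: "weighted_omega c z (rescale \<phi> z) = 0"
  by (simp add: weighted_omega_def rescale_def algebra_simps)

lemma weighted_inner_cx_i: "weighted_inner c z (cx_i w) = - weighted_omega c z w"
  by (simp add: weighted_inner_def weighted_omega_def cx_i_def sum_negf[symmetric] algebra_simps)

lemma weighted_omega_cx_i: "weighted_omega c z (cx_i w) = weighted_inner c z w"
  by (simp add: weighted_inner_def weighted_omega_def cx_i_def algebra_simps)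

lemma linear_weighted_inner: "linear (weighted_inner c z)"
proof (rule linearI)
  show "weighted_inner c z (v + w) = weighted_inner c z v + weighted_inner c z w" for v w
    unfolding weighted_inner_def sum.distrib[symmetric] by (rule sum.cong) (simp_all add: algebra_simps)
  show "weighted_inner c z (s *\<^sub>R v) = s *\<^sub>R weighted_inner c z v" for s v
    unfolding weighted_inner_def by (simp add: sum_distrib_left algebra_simps)
qed

lemma linear_weighted_omega: "linear (weighted_omega c z)"
proof (rule linearI)
  show "weighted_omega c z (v + w) = weighted_omega c z v + weighted_omega c z w" for v w
    unfolding weighted_omega_def sum.distrib[symmetric] by (rule sum.cong) (simp_all add: algebra_simps)
  show "weighted_omega c z (s *\<^sub>R v) = s *\<^sub>R weighted_omega c z v" for s v
    unfolding weighted_omega_def by (simp add: sum_distrib_left algebra_simps)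
qed

lemma rescale_rescale:
  assumes "\<And>j. \<phi> j (rescale \<psi> z) * \<psi> j z = 1"
  shows "rescale \<phi> (rescale \<psi> z) = z"
  using assms by (simp add: rescale_def vec_eq_iff mult.assoc[symmetric] of_real_mult[symmetric])

lemma Zfield_eq_rescale: "Zfield a = rescale (\<lambda>j _. 2 * pi / a $ j)"
  by (simp add: Zfield_def rescale_def fun_eq_iff)

lemma elementary_real_sum:
  assumes "\<And>i. i \<in> I \<Longrightarrow> f i \<in> elementary_real U" and "finite I"
  shows "(\<lambda>x. \<Sum>i\<in>I. f i x) \<in> elementary_real U"
  using assms(2,1)
  by (induction I rule: finite_induct) (auto intro: elementary_real.const elementary_real.add)

lemma weighted_sq_elementary:
  fixes U :: "(complex^'n) set"
  shows "weighted_sq c \<in> elementary_real U"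
proof -
  have component: "(\<lambda>z::complex^'n. Re (z $ j)) \<in> elementary_real U"
    "(\<lambda>z::complex^'n. Im (z $ j)) \<in> elementary_real U" for j
    by (auto intro!: elementary_real.linear bounded_linear_compose[OF _ bounded_linear_vec_nth]
        bounded_linear_Re bounded_linear_Im)
  have "weighted_sq c = (\<lambda>z. \<Sum>j\<in>UNIV. c j * (Re (z $ j) * Re (z $ j) + Im (z $ j) * Im (z $ j)))"
    unfolding weighted_sq_def cmod_power2 by (simp add: power2_eq_square)
  also have "\<dots> \<in> elementary_real U"
    by (intro elementary_real_sum elementary_real.mult elementary_real.add elementary_real.const
        component finite)
  finally show ?thesis .
qed

lemma rescale_elementary:
  fixes \<phi> :: "'n \<Rightarrow> complex^'n \<Rightarrow> real"
  assumes "\<And>j. \<phi> j \<in> elementary_real U"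
  shows "rescale \<phi> \<in> elementary_vec U"
  unfolding elementary_vec_def
proof (intro CollectI ballI)
  fix b :: "complex^'n" assume "b \<in> Basis"
  then obtain j e where b: "b = axis j e" and "e \<in> (Basis :: complex set)"
    unfolding Basis_vec_def by blast
  have "(\<lambda>z. rescale \<phi> z \<bullet> b) = (\<lambda>z. \<phi> j z * (z $ j \<bullet> e))"
    by (simp add: rescale_def b inner_axis scaleR_conv_of_real[symmetric])
  also have "\<dots> \<in> elementary_real U"
    by (intro elementary_real.mult assms elementary_real.linear
        bounded_linear_compose[OF bounded_linear_inner_left bounded_linear_vec_nth])
  finally show "(\<lambda>z. rescale \<phi> z \<bullet> b) \<in> elementary_real U" .
qed

lemma weighted_sq_has_real_derivative:
  assumes "(\<gamma> has_vector_derivative v) (at t)"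
  shows "((\<lambda>t. weighted_sq c (\<gamma> t)) has_real_derivative 2 * weighted_inner c (\<gamma> t) v) (at t)"
proof -
  have Re: "((\<lambda>t. Re (\<gamma> t $ j)) has_real_derivative Re (v $ j)) (at t)"
    and Im: "((\<lambda>t. Im (\<gamma> t $ j)) has_real_derivative Im (v $ j)) (at t)" for j
    using bounded_linear.has_vector_derivative[OF bounded_linear_compose[OF bounded_linear_Re
          bounded_linear_vec_nth] assms]
      bounded_linear.has_vector_derivative[OF bounded_linear_compose[OF bounded_linear_Im
          bounded_linear_vec_nth] assms]
    by (simp_all add: has_real_derivative_iff_has_vector_derivative)
  have "((\<lambda>t. weighted_inner c (\<gamma> t) (\<gamma> t)) has_real_derivative
      (\<Sum>j\<in>UNIV. c j * (Re (v $ j) * Re (\<gamma> t $ j) + Re (v $ j) * Re (\<gamma> t $ j) +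
        (Im (v $ j) * Im (\<gamma> t $ j) + Im (v $ j) * Im (\<gamma> t $ j))))) (at t)"
    unfolding weighted_inner_def by (intro DERIV_sum DERIV_cmult DERIV_add DERIV_mult Re Im)
  then show ?thesis
    unfolding weighted_sq_eq_weighted_inner weighted_inner_def sum_distrib_left
    by (simp add: algebra_simps)
qed

lemma powr_neg_half_squared:
  fixes x :: real
  assumes "x > 0"
  shows "(x powr (-1/2))\<^sup>2 = 1 / x"
  using assms by (simp add: power2_eq_square powr_add[symmetric] powr_minus_divide)

lemma tangent_space_weighted_sphere:
  assumes "\<And>j. c j > 0" and "r > 0" and "weighted_sq c p = r"
  shows "tangent_space {z. weighted_sq c z = r} p = {w. weighted_inner c p w = 0}"
proof (intro set_eqI iffI)
  fix w assume "w \<in> tangent_space {z. weighted_sq c z = r} p"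
  then obtain \<gamma> where "\<forall>t. weighted_sq c (\<gamma> t) = r" "\<gamma> 0 = p" "(\<gamma> has_vector_derivative w) (at 0)"
    unfolding tangent_space_def by auto
  then have "((\<lambda>t. r) has_real_derivative 2 * weighted_inner c p w) (at 0)"
    using weighted_sq_has_real_derivative[of \<gamma> w 0 c] by simp
  then show "w \<in> {w. weighted_inner c p w = 0}"
    using DERIV_unique[OF _ DERIV_const] by fastforce
next
  fix w assume "w \<in> {w. weighted_inner c p w = 0}"
  then have w: "weighted_inner c p w = 0" by simp
  \<comment> \<open>the line through \<open>p\<close> in direction \<open>w\<close>, projected radially back onto the sphere\<close>
  define q where "q t = p + t *\<^sub>R w" for t
  define f where "f t = (weighted_sq c (q t) / r) powr (-1/2)" for t
  have "weighted_inner c p (q t) = r" for t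
    using w assms(3) linear_weighted_inner[of c p]
    by (simp add: q_def linear_add linear_scale weighted_sq_eq_weighted_inner)
  then have "q t \<noteq> 0" for t
    using \<open>r > 0\<close> linear_0[OF linear_weighted_inner, of c p] by (metis less_irrefl)
  then have q_pos: "weighted_sq c (q t) > 0" for t
    by (intro weighted_sq_pos assms(1))
  then have q_pos': "weighted_sq c (q t) / r > 0" for t
    using \<open>r > 0\<close> by simp
  have on_sphere: "weighted_sq c (f t *\<^sub>R q t) = r" for t
  proof -
    have "(f t)\<^sup>2 = r / weighted_sq c (q t)"
      using powr_neg_half_squared[OF q_pos'[of t]] by (simp add: f_def)
    then show ?thesis
      using q_pos[of t] \<open>r > 0\<close> by (simp add: weighted_sq_scaleR)
  qed
  have q0: "q 0 = p" and f0: "f 0 = 1"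
    using assms(3) \<open>r > 0\<close> by (simp_all add: q_def f_def)
  have dq: "(q has_vector_derivative w) (at 0)"
    unfolding q_def by (auto intro!: derivative_eq_intros)
  have "((\<lambda>t. weighted_sq c (q t) / r) has_real_derivative 0) (at 0)"
    using DERIV_cdivide[OF weighted_sq_has_real_derivative[OF dq, of c], where c=r] w by (simp add: q0)
  from DERIV_powr[OF this q_pos' DERIV_const, of "-1/2"]
  have "(f has_real_derivative 0) (at 0)"
    unfolding f_def by simp
  from has_vector_derivative_scaleR[OF this dq]
  have "((\<lambda>t. f t *\<^sub>R q t) has_vector_derivative w) (at 0)"
    by (simp add: f0)
  then show "w \<in> tangent_space {z. weighted_sq c z = r} p"
    unfolding tangent_space_def using on_sphere q0 f0 by force
qed

lemma cx_i_image_weighted_inner_kernel: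
  "cx_i ` {w. weighted_inner c p w = 0} = {w. weighted_omega c p w = 0}"
proof (intro set_eqI iffI)
  fix w assume "w \<in> cx_i ` {w. weighted_inner c p w = 0}"
  then show "w \<in> {w. weighted_omega c p w = 0}"
    by (auto simp: weighted_omega_cx_i)
next
  fix w assume "w \<in> {w. weighted_omega c p w = 0}"
  moreover have "w = cx_i (- cx_i w)"
    by (simp add: cx_i_def vec_eq_iff)
  moreover have "weighted_inner c p (- cx_i w) = weighted_omega c p w"
    unfolding linear_neg[OF linear_weighted_inner] weighted_inner_cx_i by simp
  ultimately show "w \<in> cx_i ` {w. weighted_inner c p w = 0}"
    by force
qed

lemma rescale_component_has_vector_derivative:
  fixes \<phi> :: "complex^'n \<Rightarrow> real"
  assumes "\<phi> differentiable (at (\<gamma> t))" and "(\<gamma> has_vector_derivative v) (at t)"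
  shows "((\<lambda>s. complex_of_real (\<phi> (\<gamma> s)) * \<gamma> s $ j) has_vector_derivative
      complex_of_real (\<phi> (\<gamma> t)) * v $ j +
      complex_of_real (frechet_derivative \<phi> (at (\<gamma> t)) v) * \<gamma> t $ j) (at t)"
proof -
  let ?D = "frechet_derivative \<phi> (at (\<gamma> t))"
  have "(\<phi> has_derivative ?D) (at (\<gamma> t))"
    using assms(1) frechet_derivative_works by blast
  from has_derivative_compose[OF assms(2)[unfolded has_vector_derivative_def] this]
  have "((\<lambda>s. \<phi> (\<gamma> s)) has_derivative (\<lambda>h. ?D v * h)) (at t)"
    using linear_scale[OF has_derivative_linear[OF \<open>(\<phi> has_derivative ?D) _\<close>]]
    by (simp add: mult.commute)
  then have "((\<lambda>s. \<phi> (\<gamma> s)) has_real_derivative ?D v) (at t)"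
    by (simp add: has_field_derivative_def)
  then show ?thesis
    by (intro has_vector_derivative_mult has_vector_derivative_of_real
        bounded_linear.has_vector_derivative[OF bounded_linear_vec_nth assms(2)])
qed

lemma lambda_std_rescale:
  assumes "\<And>j. \<phi> j differentiable (at (\<gamma> t))"
    and "(\<gamma> has_vector_derivative v) (at t)"
    and "((rescale \<phi> \<circ> \<gamma>) has_vector_derivative w) (at t)"
  shows "lambda_std (rescale \<phi> (\<gamma> t)) w = weighted_omega (\<lambda>j. (\<phi> j (\<gamma> t))\<^sup>2 / 2) (\<gamma> t) v"
proof -
  have "w $ j = complex_of_real (\<phi> j (\<gamma> t)) * v $ j +
      complex_of_real (frechet_derivative (\<phi> j) (at (\<gamma> t)) v) * \<gamma> t $ j" for j
  proof (rule vector_derivative_unique_at)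
    show "((\<lambda>s. (rescale \<phi> \<circ> \<gamma>) s $ j) has_vector_derivative w $ j) (at t)"
      by (rule bounded_linear.has_vector_derivative[OF bounded_linear_vec_nth assms(3)])
    show "((\<lambda>s. (rescale \<phi> \<circ> \<gamma>) s $ j) has_vector_derivative
        complex_of_real (\<phi> j (\<gamma> t)) * v $ j +
        complex_of_real (frechet_derivative (\<phi> j) (at (\<gamma> t)) v) * \<gamma> t $ j) (at t)"
      using rescale_component_has_vector_derivative[OF assms(1,2), of j j]
      by (simp add: rescale_def o_def)
  qed
  then show ?thesis
    unfolding lambda_std_def weighted_omega_def sum_distrib_left
    by (intro sum.cong refl) (auto simp: rescale_def algebra_simps power2_eq_square)
qed

lemma linear_on_subspace_proportional:
  assumes "subspace T" and "linear_on_subspace T f" and "linear M"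
    and "\<forall>u\<in>T. M u = 0 \<longrightarrow> f u = 0" and "z \<in> T" and "M z \<noteq> 0" and "v \<in> T"
  shows "f v = M v / M z * f z"
proof -
  define s where "s = M v / M z"
  have "v - s *\<^sub>R z \<in> T" and "s *\<^sub>R z \<in> T"
    using assms(1,5,7) by (simp_all add: subspace_diff subspace_scale)
  moreover have "M (v - s *\<^sub>R z) = 0"
    using \<open>M z \<noteq> 0\<close> by (simp add: s_def linear_diff[OF assms(3)] linear_scale[OF assms(3)])
  ultimately have "f (v - s *\<^sub>R z) = 0"
    using assms(4) by blast
  moreover have "f v = f (v - s *\<^sub>R z) + f (s *\<^sub>R z)"
    using assms(2) \<open>v - s *\<^sub>R z \<in> T\<close> \<open>s *\<^sub>R z \<in> T\<close> unfolding linear_on_subspace_def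
    by (metis diff_add_cancel)
  moreover have "f (s *\<^sub>R z) = s * f z"
    using assms(2,5) unfolding linear_on_subspace_def by blast
  ultimately show ?thesis
    by (simp add: s_def)
qed

section \<open>The rescaling of the ellipsoid\<close>

lemma powr_mult_eq_one:
  fixes x y :: real
  assumes "x > 0" "y > 0" "x * y = 1"
  shows "x powr r * y powr r = 1"
  using assms by (simp add: powr_mult[symmetric])

definition ellipsoid_scale :: "real^'n \<Rightarrow> 'n \<Rightarrow> complex^'n \<Rightarrow> real" where
  "ellipsoid_scale a j z = (pi * a $ j * weighted_sq (\<lambda>k. 1 / (a $ k)\<^sup>2) z) powr (-1/2)"

definition ellipsoid_unscale :: "real^'n \<Rightarrow> 'n \<Rightarrow> complex^'n \<Rightarrow> real" where
  "ellipsoid_unscale a j u = (pi / a $ j * weighted_sq (\<lambda>_. 1) u) powr (-1/2)"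

definition ellipsoid_rescaling :: "real^'n \<Rightarrow> complex^'n \<Rightarrow> complex^'n" where
  "ellipsoid_rescaling a = rescale (ellipsoid_scale a)"

definition ellipsoid_unrescaling :: "real^'n \<Rightarrow> complex^'n \<Rightarrow> complex^'n" where
  "ellipsoid_unrescaling a = rescale (ellipsoid_unscale a)"

lemma ellipsoid_boundary_eq_weighted_sphere:
  "ellipsoid_boundary a = {z. weighted_sq (\<lambda>j. 1 / a $ j) z = 1 / pi}"
  unfolding ellipsoid_boundary_def weighted_sq_def by (auto simp: field_simps)

lemma zero_notin_ellipsoid_boundary: "0 \<notin> ellipsoid_boundary a"
  by (simp add: ellipsoid_boundary_def)

lemma weighted_sq_inverse_square_pos:
  assumes "\<And>j. a $ j > 0" and "z \<noteq> 0"
  shows "weighted_sq (\<lambda>k. 1 / (a $ k)\<^sup>2) z > 0"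
proof (rule weighted_sq_pos[OF _ assms(2)])
  fix j show "1 / (a $ j)\<^sup>2 > 0" using assms(1)[of j] by simp
qed

lemma weighted_sq_one_pos: "z \<noteq> 0 \<Longrightarrow> weighted_sq (\<lambda>_. 1) z > 0"
  by (intro weighted_sq_pos) simp_all

lemma ellipsoid_scale_elementary:
  fixes a :: "real^'n"
  assumes "\<And>j. a $ j > 0"
  shows "ellipsoid_scale a j \<in> elementary_real (- {0})"
  unfolding ellipsoid_scale_def[abs_def]
proof (intro elementary_real.powr elementary_real.mult elementary_real.const weighted_sq_elementary ballI)
  fix z :: "complex^'n" assume "z \<in> - {0}"
  then show "pi * a $ j * weighted_sq (\<lambda>k. 1 / (a $ k)\<^sup>2) z > 0"
    using assms weighted_sq_inverse_square_pos[OF assms, of z] by simp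
qed

lemma ellipsoid_unscale_elementary:
  fixes a :: "real^'n"
  assumes "\<And>j. a $ j > 0"
  shows "ellipsoid_unscale a j \<in> elementary_real (- {0})"
  unfolding ellipsoid_unscale_def[abs_def]
proof (intro elementary_real.powr elementary_real.mult elementary_real.const weighted_sq_elementary ballI)
  fix u :: "complex^'n" assume "u \<in> - {0}"
  then show "pi / a $ j * weighted_sq (\<lambda>_. 1) u > 0"
    using assms weighted_sq_one_pos[of u] by simp
qed

lemma ellipsoid_scale_squared:
  assumes "\<And>j. a $ j > 0" and "z \<noteq> 0"
  shows "(ellipsoid_scale a j z)\<^sup>2 = 1 / (pi * a $ j * weighted_sq (\<lambda>k. 1 / (a $ k)\<^sup>2) z)"
  unfolding ellipsoid_scale_def using assms weighted_sq_inverse_square_pos[OF assms]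
  by (intro powr_neg_half_squared) simp

lemma ellipsoid_unscale_squared:
  assumes "\<And>j. a $ j > 0" and "u \<noteq> 0"
  shows "(ellipsoid_unscale a j u)\<^sup>2 = a $ j / (pi * weighted_sq (\<lambda>_. 1) u)"
  unfolding ellipsoid_unscale_def using assms weighted_sq_one_pos[OF assms(2)]
  by (subst powr_neg_half_squared) simp_all

lemma weighted_sq_ellipsoid_rescaling:
  assumes "\<And>j. a $ j > 0" and "z \<noteq> 0"
  shows "weighted_sq c (ellipsoid_rescaling a z) =
    weighted_sq (\<lambda>j. c j / a $ j) z / (pi * weighted_sq (\<lambda>k. 1 / (a $ k)\<^sup>2) z)"
proof -
  let ?S = "weighted_sq (\<lambda>k. 1 / (a $ k)\<^sup>2) z"
  have "?S > 0" by (rule weighted_sq_inverse_square_pos[OF assms])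
  then have "(\<lambda>j. (ellipsoid_scale a j z)\<^sup>2 * c j) = (\<lambda>j. c j / a $ j / (pi * ?S))"
    using assms by (simp add: ellipsoid_scale_squared fun_eq_iff field_simps)
  then show ?thesis
    unfolding ellipsoid_rescaling_def weighted_sq_rescale by (simp only: weighted_sq_divide_weights)
qed

lemma weighted_sq_ellipsoid_unrescaling:
  assumes "\<And>j. a $ j > 0" and "u \<noteq> 0"
  shows "weighted_sq c (ellipsoid_unrescaling a u) =
    weighted_sq (\<lambda>j. a $ j * c j) u / (pi * weighted_sq (\<lambda>_. 1) u)"
proof -
  have "(\<lambda>j. (ellipsoid_unscale a j u)\<^sup>2 * c j) = (\<lambda>j. a $ j * c j / (pi * weighted_sq (\<lambda>_. 1) u))"
    using assms by (simp add: ellipsoid_unscale_squared fun_eq_iff)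
  then show ?thesis
    unfolding ellipsoid_unrescaling_def weighted_sq_rescale by (simp only: weighted_sq_divide_weights)
qed

lemma ellipsoid_rescaling_in_boundary:
  assumes "\<And>j. a $ j > 0" and "z \<noteq> 0"
  shows "ellipsoid_rescaling a z \<in> ellipsoid_boundary a"
proof -
  have "(\<lambda>j. 1 / a $ j / a $ j) = (\<lambda>j. 1 / (a $ j)\<^sup>2)"
    by (simp add: power2_eq_square)
  then show ?thesis
    using assms weighted_sq_inverse_square_pos[OF assms]
    by (simp add: ellipsoid_boundary_eq_weighted_sphere weighted_sq_ellipsoid_rescaling)
qed

lemma ellipsoid_unrescaling_in_boundary:
  assumes "\<And>j. a $ j > 0" and "u \<noteq> 0"
  shows "ellipsoid_unrescaling a u \<in> ellipsoid_boundary a"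
proof -
  have "(\<lambda>j. a $ j * (1 / a $ j)) = (\<lambda>_. 1)"
    using assms by (simp add: less_imp_neq[symmetric])
  then show ?thesis
    using assms weighted_sq_one_pos[OF assms(2)]
    by (simp add: ellipsoid_boundary_eq_weighted_sphere weighted_sq_ellipsoid_unrescaling)
qed

lemma ellipsoid_unrescaling_rescaling:
  assumes "\<And>j. a $ j > 0" and "z \<in> ellipsoid_boundary a"
  shows "ellipsoid_unrescaling a (ellipsoid_rescaling a z) = z"
proof -
  let ?S = "weighted_sq (\<lambda>k. 1 / (a $ k)\<^sup>2) z"
  have "z \<noteq> 0" using assms(2) zero_notin_ellipsoid_boundary by blast
  then have "?S > 0" by (rule weighted_sq_inverse_square_pos[OF assms(1)])
  have N: "weighted_sq (\<lambda>_. 1) (ellipsoid_rescaling a z) = 1 / (pi * pi * ?S)"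
    using assms \<open>z \<noteq> 0\<close>
    by (simp add: weighted_sq_ellipsoid_rescaling ellipsoid_boundary_eq_weighted_sphere)
  have "ellipsoid_unscale a j (ellipsoid_rescaling a z) * ellipsoid_scale a j z = 1" for j
    unfolding ellipsoid_unscale_def ellipsoid_scale_def
    using \<open>?S > 0\<close> assms(1)[of j] by (intro powr_mult_eq_one) (simp_all add: N field_simps)
  then show ?thesis
    unfolding ellipsoid_unrescaling_def ellipsoid_rescaling_def by (rule rescale_rescale)
qed

lemma ellipsoid_rescaling_unrescaling:
  assumes "\<And>j. a $ j > 0" and "u \<in> ellipsoid_boundary a"
  shows "ellipsoid_rescaling a (ellipsoid_unrescaling a u) = u"
proof -
  let ?N = "weighted_sq (\<lambda>_. 1) u"
  have "u \<noteq> 0" using assms(2) zero_notin_ellipsoid_boundary by blast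
  then have "?N > 0" by (rule weighted_sq_one_pos)
  have "(\<lambda>j. a $ j * (1 / (a $ j)\<^sup>2)) = (\<lambda>j. 1 / a $ j)"
    using assms(1) by (simp add: fun_eq_iff power2_eq_square less_imp_neq[symmetric])
  then have S: "weighted_sq (\<lambda>k. 1 / (a $ k)\<^sup>2) (ellipsoid_unrescaling a u) = 1 / (pi * pi * ?N)"
    using assms \<open>u \<noteq> 0\<close>
    by (simp add: weighted_sq_ellipsoid_unrescaling ellipsoid_boundary_eq_weighted_sphere)
  have "ellipsoid_scale a j (ellipsoid_unrescaling a u) * ellipsoid_unscale a j u = 1" for j
    unfolding ellipsoid_unscale_def ellipsoid_scale_def
    using \<open>?N > 0\<close> assms(1)[of j] by (intro powr_mult_eq_one) (simp_all add: S field_simps)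
  then show ?thesis
    unfolding ellipsoid_unrescaling_def ellipsoid_rescaling_def by (rule rescale_rescale)
qed

lemma diffeo_on_ellipsoid_rescaling:
  assumes "\<And>j. a $ j > 0"
  shows "diffeo_on (ellipsoid_boundary a) (ellipsoid_rescaling a)"
proof -
  let ?E = "ellipsoid_boundary a"
  have "?E \<subseteq> - {0}" using zero_notin_ellipsoid_boundary by blast
  then have nonzero: "z \<noteq> 0" if "z \<in> ?E" for z using that by blast
  have bij: "bij_betw (ellipsoid_rescaling a) ?E ?E"
  proof (rule bij_betw_byWitness[where f' = "ellipsoid_unrescaling a"])
    show "\<forall>z\<in>?E. ellipsoid_unrescaling a (ellipsoid_rescaling a z) = z"
      using ellipsoid_unrescaling_rescaling[OF assms] by blast
    show "\<forall>u\<in>?E. ellipsoid_rescaling a (ellipsoid_unrescaling a u) = u"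
      using ellipsoid_rescaling_unrescaling[OF assms] by blast
    show "ellipsoid_rescaling a ` ?E \<subseteq> ?E" "ellipsoid_unrescaling a ` ?E \<subseteq> ?E"
      using ellipsoid_rescaling_in_boundary[OF assms nonzero]
        ellipsoid_unrescaling_in_boundary[OF assms nonzero] by blast+
  qed
  have inv: "inv_into ?E (ellipsoid_rescaling a) u = ellipsoid_unrescaling a u" if "u \<in> ?E" for u
    using bij ellipsoid_unrescaling_in_boundary[OF assms nonzero[OF that]]
      ellipsoid_rescaling_unrescaling[OF assms that]
    by (intro inv_into_f_eq) (auto simp: bij_betw_def)
  have "smooth_on (- {0}) (ellipsoid_rescaling a)" "smooth_on (- {0}) (ellipsoid_unrescaling a)"
    unfolding ellipsoid_rescaling_def ellipsoid_unrescaling_def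
    using assms by (auto intro!: smooth_on_elementary_vec rescale_elementary
        ellipsoid_scale_elementary ellipsoid_unscale_elementary)
  with bij inv \<open>?E \<subseteq> - {0}\<close> show ?thesis
    unfolding diffeo_on_def smooth_map_on_def by metis
qed

lemma tangent_space_ellipsoid_boundary:
  assumes "\<And>j. a $ j > 0" and "p \<in> ellipsoid_boundary a"
  shows "tangent_space (ellipsoid_boundary a) p = {w. weighted_inner (\<lambda>j. 1 / a $ j) p w = 0}"
  using assms unfolding ellipsoid_boundary_eq_weighted_sphere
  by (intro tangent_space_weighted_sphere) simp_all

lemma lambda_std_ellipsoid_rescaling:
  assumes "\<And>j. a $ j > 0" and "p \<in> ellipsoid_boundary a" and "\<gamma> t = p"
    and "(\<gamma> has_vector_derivative v) (at t)"
    and "((ellipsoid_rescaling a \<circ> \<gamma>) has_vector_derivative w) (at t)"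
  shows "lambda_std (ellipsoid_rescaling a p) w =
    weighted_omega (\<lambda>j. 1 / a $ j) p v / (2 * pi * weighted_sq (\<lambda>k. 1 / (a $ k)\<^sup>2) p)"
proof -
  let ?S = "weighted_sq (\<lambda>k. 1 / (a $ k)\<^sup>2) p"
  have "p \<noteq> 0" using assms(2) zero_notin_ellipsoid_boundary by blast
  have "ellipsoid_scale a j differentiable (at p)" for j
  proof -
    obtain D where "\<forall>x\<in>- {0}. (ellipsoid_scale a j has_derivative D x) (at x)"
      using elementary_real_has_derivative[OF ellipsoid_scale_elementary[OF assms(1)]] by blast
    then show ?thesis
      using \<open>p \<noteq> 0\<close> unfolding differentiable_def by blast
  qed
  then have "lambda_std (ellipsoid_rescaling a p) w =
      weighted_omega (\<lambda>j. (ellipsoid_scale a j p)\<^sup>2 / 2) p v"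
    using lambda_std_rescale[of "ellipsoid_scale a" \<gamma> t v w] assms(3-5)
    by (simp add: ellipsoid_rescaling_def)
  also have "(\<lambda>j. (ellipsoid_scale a j p)\<^sup>2 / 2) = (\<lambda>j. 1 / a $ j / (2 * pi * ?S))"
    using assms(1) \<open>p \<noteq> 0\<close> by (simp add: fun_eq_iff ellipsoid_scale_squared field_simps)
  finally show ?thesis
    by (simp only: weighted_omega_divide_weights)
qed

lemma ellipsoid_contact_form_eq:
  assumes "\<And>j. a $ j > 0" and "p \<in> ellipsoid_boundary a"
    and "linear_on_subspace (tangent_space (ellipsoid_boundary a) p) f"
    and "\<forall>u \<in> tangent_space (ellipsoid_boundary a) p \<inter> cx_i ` tangent_space (ellipsoid_boundary a) p.
      f u = 0"
    and "f (cx_i (Zfield a p)) = 1"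
    and "v \<in> tangent_space (ellipsoid_boundary a) p"
  shows "f v = weighted_omega (\<lambda>j. 1 / a $ j) p v / (2 * pi * weighted_sq (\<lambda>k. 1 / (a $ k)\<^sup>2) p)"
proof -
  let ?c = "\<lambda>j. 1 / a $ j" and ?T = "tangent_space (ellipsoid_boundary a) p"
  let ?iZ = "cx_i (Zfield a p)"
  have T: "?T = {w. weighted_inner ?c p w = 0}"
    by (rule tangent_space_ellipsoid_boundary[OF assms(1,2)])
  have "subspace ?T"
    unfolding T using linear_weighted_inner[of ?c p]
    by (simp add: subspace_def linear_0 linear_add linear_scale)
  have "?iZ \<in> ?T"
    unfolding T Zfield_eq_rescale by (simp add: weighted_inner_cx_i weighted_omega_rescale_self)
  have "weighted_omega ?c p ?iZ = weighted_sq (\<lambda>j. 2 * pi / a $ j * (1 / a $ j)) p"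
    unfolding Zfield_eq_rescale weighted_omega_cx_i weighted_inner_rescale_self ..
  also have "\<dots> = 2 * pi * weighted_sq (\<lambda>k. 1 / (a $ k)\<^sup>2) p"
    by (simp add: weighted_sq_def sum_distrib_left power2_eq_square mult_ac)
  finally have omega_iZ: "weighted_omega ?c p ?iZ = 2 * pi * weighted_sq (\<lambda>k. 1 / (a $ k)\<^sup>2) p" .
  have "p \<noteq> 0" using assms(2) zero_notin_ellipsoid_boundary by blast
  then have "weighted_omega ?c p ?iZ \<noteq> 0"
    unfolding omega_iZ using weighted_sq_inverse_square_pos[OF assms(1) \<open>p \<noteq> 0\<close>] by simp
  have "\<forall>u\<in>?T. weighted_omega ?c p u = 0 \<longrightarrow> f u = 0"
    using assms(4) unfolding T cx_i_image_weighted_inner_kernel by blast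
  from linear_on_subspace_proportional[OF \<open>subspace ?T\<close> assms(3) linear_weighted_omega this
      \<open>?iZ \<in> ?T\<close> \<open>weighted_omega ?c p ?iZ \<noteq> 0\<close> assms(6)]
  show ?thesis
    unfolding omega_iZ assms(5) by simp
qed

theorem mainTheorem8:
  fixes a :: "real ^ 'n" and \<beta> :: "complex ^ 'n \<Rightarrow> complex ^ 'n \<Rightarrow> real"
  assumes a_pos: "\<forall>j. a $ j > 0"
    and beta_linear: "\<forall>p\<in>ellipsoid_boundary a.
          linear_on_subspace (tangent_space (ellipsoid_boundary a) p) (\<beta> p)"
    and beta_ker: "\<forall>p\<in>ellipsoid_boundary a.
          {v\<in>tangent_space (ellipsoid_boundary a) p. \<beta> p v = 0}
          = tangent_space (ellipsoid_boundary a) p \<inter>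
            cx_i ` tangent_space (ellipsoid_boundary a) p"
    and beta_iZ: "\<forall>p\<in>ellipsoid_boundary a. \<beta> p (cx_i (Zfield a p)) = 1"
  shows "\<exists>G. diffeo_on (ellipsoid_boundary a) G \<and>
           (\<forall>p\<in>ellipsoid_boundary a. \<forall>\<gamma> v w.
              (\<forall>t. \<gamma> t \<in> ellipsoid_boundary a) \<and> \<gamma> 0 = p \<and>
              (\<gamma> has_vector_derivative v) (at 0) \<and>
              ((G \<circ> \<gamma>) has_vector_derivative w) (at 0)
              \<longrightarrow> lambda_std (G p) w = \<beta> p v)"
proof (intro exI[of _ "ellipsoid_rescaling a"] conjI ballI allI impI)
  have a: "\<And>j. a $ j > 0" using a_pos by blast
  show "diffeo_on (ellipsoid_boundary a) (ellipsoid_rescaling a)"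
    by (rule diffeo_on_ellipsoid_rescaling[OF a])
  fix p \<gamma> v w
  assume p: "p \<in> ellipsoid_boundary a"
    and curve: "(\<forall>t. \<gamma> t \<in> ellipsoid_boundary a) \<and> \<gamma> 0 = p \<and>
      (\<gamma> has_vector_derivative v) (at 0) \<and>
      ((ellipsoid_rescaling a \<circ> \<gamma>) has_vector_derivative w) (at 0)"
  then have "v \<in> tangent_space (ellipsoid_boundary a) p"
    unfolding tangent_space_def by blast
  with p beta_linear beta_ker beta_iZ
  have "\<beta> p v = weighted_omega (\<lambda>j. 1 / a $ j) p v / (2 * pi * weighted_sq (\<lambda>k. 1 / (a $ k)\<^sup>2) p)"
    by (intro ellipsoid_contact_form_eq[OF a]) auto
  moreover have "lambda_std (ellipsoid_rescaling a p) w =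
      weighted_omega (\<lambda>j. 1 / a $ j) p v / (2 * pi * weighted_sq (\<lambda>k. 1 / (a $ k)\<^sup>2) p)"
    using curve lambda_std_ellipsoid_rescaling[OF a p, of \<gamma> 0 v w] by blast
  ultimately show "lambda_std (ellipsoid_rescaling a p) w = \<beta> p v" by simp
qed

end
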